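(* Let $\Gamma$ be a Deza graph with parameters $(n,k,k-1,a)$, $k>1$, $\beta=1$. If $x$ is an $A$-vertex of $\Gamma$, then $N(x)\setminus\{x_b\}=N(x_b)\setminus\{x\}$.
   Context: A Deza graph with parameters $(n,k,b,a)$, $a\le b$, is a $k$-regular graph on $n$ vertices in which any two distinct vertices have $a$ or $b$ common neighbours; $\beta$ is the number of vertices $u\ne v$ with exactly $b$ common neighbours with a given vertex $v$ (independent of $v$). Since $\beta=1$, for each vertex $x$ let $x_b$ denote the unique vertex having $b=k-1$ common neighbours with $x$. $N(x)$ is the set of neighbours of $x$. A vertex $x$ is an $A$-vertex if $x$ is adjacent to $x_b$, and an $NA$-vertex otherwise. *)

theory Defs
  imports Main
begin

definition nbrs :: "'a set \<Rightarrow> ('a \<Rightarrow> 'a \<Rightarrow> bool) \<Rightarrow> 'a \<Rightarrow> 'a set" where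
  "nbrs V E x = {y \<in> V. E x y}"

definition common :: "'a set \<Rightarrow> ('a \<Rightarrow> 'a \<Rightarrow> bool) \<Rightarrow> 'a \<Rightarrow> 'a \<Rightarrow> nat" where
  "common V E x y = card (nbrs V E x \<inter> nbrs V E y)"

definition deza_graph :: "'a set \<Rightarrow> ('a \<Rightarrow> 'a \<Rightarrow> bool) \<Rightarrow> nat \<Rightarrow> nat \<Rightarrow> nat \<Rightarrow> nat \<Rightarrow> bool" where
  "deza_graph V E n k b a \<longleftrightarrow>
     finite V \<and> card V = n \<and>
     (\<forall>x\<in>V. \<forall>y\<in>V. E x y \<longleftrightarrow> E y x) \<and>
     (\<forall>x\<in>V. \<not> E x x) \<and>
     (\<forall>x\<in>V. card (nbrs V E x) = k) \<and>
     a \<le> b \<and>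
     (\<forall>x\<in>V. \<forall>y\<in>V. x \<noteq> y \<longrightarrow> common V E x y = a \<or> common V E x y = b)"

definition deza_beta :: "'a set \<Rightarrow> ('a \<Rightarrow> 'a \<Rightarrow> bool) \<Rightarrow> nat \<Rightarrow> 'a \<Rightarrow> nat" where
  "deza_beta V E b v = card {u \<in> V. u \<noteq> v \<and> common V E u v = b}"

text \<open>x_b: the (unique, when beta = 1) vertex having b common neighbours with x.\<close>
definition partner :: "'a set \<Rightarrow> ('a \<Rightarrow> 'a \<Rightarrow> bool) \<Rightarrow> nat \<Rightarrow> 'a \<Rightarrow> 'a" where
  "partner V E b x = (THE y. y \<in> V \<and> y \<noteq> x \<and> common V E y x = b)"

definition A_vertex :: "'a set \<Rightarrow> ('a \<Rightarrow> 'a \<Rightarrow> bool) \<Rightarrow> nat \<Rightarrow> 'a \<Rightarrow> bool" where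
  "A_vertex V E b x \<longleftrightarrow> E x (partner V E b x)"

end

theory Submission
  imports Defs
begin

text \<open>If \<open>x\<close> is adjacent to \<open>x\<^sub>b\<close>, then \<open>x\<^sub>b \<in> N(x)\<close> and \<open>x \<in> N(x\<^sub>b)\<close>, while neither lies in
  \<open>N(x) \<inter> N(x\<^sub>b)\<close>. This intersection has \<open>k - 1\<close> elements, so it fills up both
  \<open>N(x) - {x\<^sub>b}\<close> and \<open>N(x\<^sub>b) - {x}\<close>, which therefore coincide.\<close>

lemma Int_eq_Diff_singleton_if_card:
  assumes "finite A" "a \<in> A" "a \<notin> B" "card (A \<inter> B) = card A - 1"
  shows "A \<inter> B = A - {a}"
  by (rule card_subset_eq) (use assms in auto)

lemma partner_if_deza_beta_eq_1:
  assumes "v \<in> V" "deza_beta V E b v = 1"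
  shows "partner V E b v \<in> V" "partner V E b v \<noteq> v" "common V E (partner V E b v) v = b"
proof -
  obtain y where y: "{u \<in> V. u \<noteq> v \<and> common V E u v = b} = {y}"
    using assms(2) unfolding deza_beta_def by (rule card_1_singletonE)
  then have "partner V E b v = y"
    unfolding partner_def by (intro the_equality) auto
  with y show "partner V E b v \<in> V" "partner V E b v \<noteq> v" "common V E (partner V E b v) v = b"
    by auto
qed

lemma common_commute: "common V E x y = common V E y x"
  unfolding common_def by (simp add: Int_commute)

lemma deza_nbrs_Diff_eq_if_adjacent:
  assumes "deza_graph V E n k b a" "x \<in> V" "y \<in> V" "E x y" "common V E x y = k - 1"
  shows "nbrs V E x - {y} = nbrs V E y - {x}"
proof -
  have fin: "finite V" and sym: "E y x" and irr: "\<not> E x x" "\<not> E y y"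
    and deg: "card (nbrs V E x) = k" "card (nbrs V E y) = k"
    using assms(1-4) unfolding deza_graph_def by auto
  have finN: "finite (nbrs V E z)" for z
    using fin unfolding nbrs_def by auto
  have "nbrs V E x \<inter> nbrs V E y = nbrs V E x - {y}"
    using finN assms(3-5) irr deg
    by (intro Int_eq_Diff_singleton_if_card) (auto simp: nbrs_def common_def)
  moreover have "nbrs V E y \<inter> nbrs V E x = nbrs V E y - {x}"
    using finN assms(2,5) sym irr deg
    by (intro Int_eq_Diff_singleton_if_card) (auto simp: nbrs_def common_def Int_commute)
  ultimately show ?thesis
    by (simp add: Int_commute)
qed

theorem lemma2:
  fixes V :: "'a set" and E :: "'a \<Rightarrow> 'a \<Rightarrow> bool" and n k a :: nat and x :: 'a
  assumes "deza_graph V E n k (k - 1) a"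
    and "k > 1"
    and "\<forall>v\<in>V. deza_beta V E (k - 1) v = 1"
    and "x \<in> V"
    and "A_vertex V E (k - 1) x"
  shows "nbrs V E x - {partner V E (k - 1) x} = nbrs V E (partner V E (k - 1) x) - {x}"
proof -
  let ?y = "partner V E (k - 1) x"
  have beta: "deza_beta V E (k - 1) x = 1"
    using assms(3,4) by blast
  have "common V E x ?y = k - 1"
    using partner_if_deza_beta_eq_1(3)[OF assms(4) beta] by (simp add: common_commute)
  moreover have "E x ?y"
    using assms(5) unfolding A_vertex_def .
  ultimately show ?thesis
    using deza_nbrs_Diff_eq_if_adjacent[OF assms(1,4) partner_if_deza_beta_eq_1(1)[OF assms(4) beta]]
    by blast
qed

end
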